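(* Let $(\Sigma_+,\Sigma_-,N_1,N_2,N_3)$ be a solution of the Wainwright–Hsu system satisfying the constraint, with $N_1=0$, $N_2,N_3>0$ and $\Sigma_-^2+(N_2-N_3)^2>0$. Then for every $p>1$, $1+\Sigma_+\in L^p([0,\infty))$.
   Context: Wainwright–Hsu system: for functions $N_1,N_2,N_3,\Sigma_+,\Sigma_-$ of $\tau\in\mathbb{R}$ (prime denotes $d/d\tau$), $N_1'=(q-4\Sigma_+)N_1$, $N_2'=(q+2\Sigma_++2\sqrt3\Sigma_-)N_2$, $N_3'=(q+2\Sigma_+-2\sqrt3\Sigma_-)N_3$, $\Sigma_+'=-(2-q)\Sigma_+-3S_+$, $\Sigma_-'=-(2-q)\Sigma_--3S_-$, where $q=2(\Sigma_+^2+\Sigma_-^2)$, $S_+=\frac12[(N_2-N_3)^2-N_1(2N_1-N_2-N_3)]$, $S_-=\frac{\sqrt3}{2}(N_3-N_2)(N_1-N_2-N_3)$, together with the constraint $\Sigma_+^2+\Sigma_-^2+\frac34[N_1^2+N_2^2+N_3^2-2(N_1N_2+N_2N_3+N_1N_3)]=1$. Solutions exist for all $\tau\in\mathbb{R}$. *)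

theory Defs
  imports "HOL-Analysis.Analysis"
begin

definition WH_q :: "real \<Rightarrow> real \<Rightarrow> real" where
  "WH_q sp sm = 2 * (sp^2 + sm^2)"

definition WH_Sp :: "real \<Rightarrow> real \<Rightarrow> real \<Rightarrow> real" where
  "WH_Sp n1 n2 n3 = (1/2) * ((n2 - n3)^2 - n1 * (2*n1 - n2 - n3))"

definition WH_Sm :: "real \<Rightarrow> real \<Rightarrow> real \<Rightarrow> real" where
  "WH_Sm n1 n2 n3 = (sqrt 3 / 2) * (n3 - n2) * (n1 - n2 - n3)"

definition WH_solution ::
  "(real \<Rightarrow> real) \<Rightarrow> (real \<Rightarrow> real) \<Rightarrow> (real \<Rightarrow> real) \<Rightarrow> (real \<Rightarrow> real) \<Rightarrow> (real \<Rightarrow> real) \<Rightarrow> bool" where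
  "WH_solution N1 N2 N3 Sp Sm \<longleftrightarrow>
    (\<forall>t. (N1 has_real_derivative (WH_q (Sp t) (Sm t) - 4 * Sp t) * N1 t) (at t)
       \<and> (N2 has_real_derivative (WH_q (Sp t) (Sm t) + 2 * Sp t + 2 * sqrt 3 * Sm t) * N2 t) (at t)
       \<and> (N3 has_real_derivative (WH_q (Sp t) (Sm t) + 2 * Sp t - 2 * sqrt 3 * Sm t) * N3 t) (at t)
       \<and> (Sp has_real_derivative (- (2 - WH_q (Sp t) (Sm t)) * Sp t - 3 * WH_Sp (N1 t) (N2 t) (N3 t))) (at t)
       \<and> (Sm has_real_derivative (- (2 - WH_q (Sp t) (Sm t)) * Sm t - 3 * WH_Sm (N1 t) (N2 t) (N3 t))) (at t)
       \<and> (Sp t)^2 + (Sm t)^2 + (3/4) * ((N1 t)^2 + (N2 t)^2 + (N3 t)^2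
            - 2 * (N1 t * N2 t + N2 t * N3 t + N1 t * N3 t)) = 1)"

end

theory Submission
  imports Defs
begin

text \<open>
  Put \<open>Z = 1 + Sp\<close> and \<open>D = N2 - N3\<close>. For \<open>N1 = 0\<close> the constraint becomes
  \<open>Sm\<^sup>2 + 3/4 D\<^sup>2 = Z (2 - Z)\<close> and \<open>Z' = -3/2 D\<^sup>2 Z\<close>, so \<open>Z\<close> decreases in \<open>[0, 2]\<close>.
  While \<open>Z > 0\<close>, \<open>(1/Z)' \<le> 4\<close>, so \<open>1/Z\<close> grows at most linearly; this makes
  \<open>N2 N3 / Z\<close> nondecreasing. That lower bound on \<open>N2 N3\<close> bounds the derivative of
  \<open>W = (1 + \<surd>3 Sm D / (6 (N2 + N3))) / Z\<close> below by a positive constant once \<open>Z < 2\<close>,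
  which the non-degeneracy hypothesis provides. Since \<open>Z W \<in> [1/2, 3/2]\<close>, the linear
  growth of \<open>W\<close> gives \<open>Z = O(1/t)\<close>, and \<open>\<bar>Z\<bar>\<^sup>p\<close> is integrable at infinity for \<open>p > 1\<close>.
\<close>

lemma set_integrable_powr_of_inverse_decay:
  fixes Z :: "real \<Rightarrow> real"
  assumes cont: "continuous_on UNIV Z" and T: "T > 0" and K: "K \<ge> 0"
    and decay: "\<And>t. t \<ge> T \<Longrightarrow> \<bar>Z t\<bar> \<le> K / t" and p: "p > 1"
  shows "set_integrable lborel {0..} (\<lambda>t. \<bar>Z t\<bar> powr p)"
proof -
  have cont_powr: "continuous_on UNIV (\<lambda>t. \<bar>Z t\<bar> powr p)"
    using p by (intro continuous_on_powr' continuous_intros cont) auto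
  have head: "set_integrable lborel {0..T} (\<lambda>t. \<bar>Z t\<bar> powr p)"
    by (rule borel_integrable_atLeastAtMost') (rule continuous_on_subset[OF cont_powr], simp)
  have "(\<lambda>x. K powr p * x powr (-p)) integrable_on {T..}"
    using has_integral_powr_to_inf[of "-p" T] p T integrable_cmul[of "\<lambda>x. x powr (-p)" "{T..}"]
    unfolding integrable_on_def by force
  hence "(\<lambda>x. K powr p * x powr (-p)) absolutely_integrable_on {T..}"
    by (subst absolutely_integrable_on_iff_nonneg) auto
  hence majorant: "set_integrable lborel {T..} (\<lambda>x. K powr p * x powr (-p))"
    unfolding set_integrable_def by (subst (asm) integrable_completion) measurable
  have tail: "set_integrable lborel {T..} (\<lambda>t. \<bar>Z t\<bar> powr p)"
  proof (rule set_integrable_bound[OF majorant])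
    show "set_borel_measurable lborel {T..} (\<lambda>t. \<bar>Z t\<bar> powr p)"
      unfolding set_borel_measurable_def
      using borel_measurable_continuous_onI[OF cont_powr] by measurable
    show "AE x in lborel. x \<in> {T..} \<longrightarrow> norm (\<bar>Z x\<bar> powr p) \<le> norm (K powr p * x powr - p)"
    proof (intro AE_I2 impI)
      fix x assume x: "x \<in> {T..}"
      have "\<bar>Z x\<bar> powr p \<le> (K / x) powr p"
        using decay[of x] x p by (intro powr_mono2) auto
      also have "\<dots> = K powr p * x powr - p"
        using x T K powr_divide[of K x p] by (simp add: powr_minus divide_inverse)
      finally show "norm (\<bar>Z x\<bar> powr p) \<le> norm (K powr p * x powr - p)" by simp
    qed
  qed
  have "{0..T} \<union> {T..} = {0::real..}" using T by auto
  with set_integrable_Un[OF head tail] show ?thesis by simp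
qed

text \<open>The lower bound for \<open>W'\<close>, in the variables \<open>a = Sm\<^sup>2\<close>, \<open>d = N2 - N3\<close>,
  \<open>m = N2 + N3\<close>, \<open>p = N2 N3\<close>, \<open>z = Z\<close>.\<close>

lemma rate_lower_bound:
  fixes a d m p z \<delta> :: real
  assumes z: "0 < z" and a: "0 \<le> a" and constraint: "a + 3/4 * d^2 = z * (2 - z)"
    and m: "m^2 = d^2 + 4 * p" and \<delta>: "0 < \<delta>" "\<delta> * z \<le> p"
  shows "3 * \<delta> * (2 - z) / (2 + 3 * \<delta>) \<le> (a + 3/4 * d^2 - a * d^2 / m^2) / z"
proof -
  define R where "R = z * (2 - z)"
  define y where "y = 3/4 * d^2"
  have p: "p > 0" using \<delta> z by (smt (verit) mult_pos_pos)
  have y: "0 \<le> y" "y \<le> R" and a_eq: "a = R - y"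
    using a constraint unfolding R_def y_def by auto
  have z2: "z \<le> 2" using y z unfolding R_def by (smt (verit) mult_pos_neg)
  have "a * d^2 / m^2 = a * (y / (y + 3 * p))"
  proof -
    have "d^2 + p * 4 > 0" "p * 12 + 3 * d^2 > 0"
      using p by (auto intro: add_nonneg_pos add_pos_nonneg)
    then show ?thesis unfolding m y_def by (simp add: field_simps)
  qed
  also have "\<dots> \<le> R * (R / (R + 3 * p))"
  proof (rule mult_mono)
    show "y / (y + 3 * p) \<le> R / (R + 3 * p)"
      using y p by (simp add: field_simps mult_left_mono)
  qed (use y p a a_eq in auto)
  also have "\<dots> = R - 3 * p * R / (R + 3 * p)"
    using y p by (simp add: field_simps)
  finally have numerator: "3 * p * R / (R + 3 * p) \<le> a + 3/4 * d^2 - a * d^2 / m^2"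
    using constraint unfolding R_def by simp
  have "3 * \<delta> * (2 - z) * (R + 3 * p) \<le> 3 * p * (2 - z) * (2 + 3 * \<delta>)"
  proof -
    have "R \<le> 2 * z" using z unfolding R_def by (simp add: mult_left_le)
    hence "\<delta> * R \<le> \<delta> * (2 * z)" using \<delta> by (intro mult_left_mono) auto
    hence "\<delta> * R \<le> 2 * p" using \<delta> by linarith
    hence "3 * \<delta> * R + 9 * \<delta> * p \<le> 6 * p + 9 * \<delta> * p" by (simp add: mult.commute)
    hence "(2 - z) * (3 * \<delta> * R + 9 * \<delta> * p) \<le> (2 - z) * (6 * p + 9 * \<delta> * p)"
      using z2 by (intro mult_left_mono) auto
    then show ?thesis by (simp add: algebra_simps)
  qed
  hence "3 * \<delta> * (2 - z) / (2 + 3 * \<delta>) \<le> 3 * p * (2 - z) / (R + 3 * p)"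
    using y p \<delta> by (simp add: field_simps)
  also have "\<dots> = (3 * p * R / (R + 3 * p)) / z"
    using z unfolding R_def by simp
  also have "\<dots> \<le> (a + 3/4 * d^2 - a * d^2 / m^2) / z"
    by (rule divide_right_mono[OF numerator]) (use z in simp)
  finally show ?thesis .
qed

locale WH_bianchi_VII0 =
  fixes N2 N3 Sp Sm :: "real \<Rightarrow> real"
  assumes sol: "WH_solution (\<lambda>_. 0) N2 N3 Sp Sm"
    and N2_pos: "\<And>t. N2 t > 0" and N3_pos: "\<And>t. N3 t > 0"
begin

definition Z :: "real \<Rightarrow> real" where "Z t = 1 + Sp t"
definition D :: "real \<Rightarrow> real" where "D t = N2 t - N3 t"
definition M :: "real \<Rightarrow> real" where "M t = N2 t + N3 t"
definition P :: "real \<Rightarrow> real" where "P t = N2 t * N3 t"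
definition W :: "real \<Rightarrow> real" where "W t = (1 + sqrt 3 * Sm t * D t / (6 * M t)) / Z t"

lemma constraint: "(Sp t)^2 + (Sm t)^2 + 3/4 * (D t)^2 = 1"
  using sol unfolding WH_solution_def D_def by (auto simp: power2_eq_square algebra_simps)

lemma q_eq: "WH_q (Sp t) (Sm t) = 2 - 3/2 * (D t)^2"
  using constraint[of t] unfolding WH_q_def by (simp add: algebra_simps)

lemma N2_deriv:
  "(N2 has_real_derivative (2 * Z t - 3/2 * (D t)^2 + 2 * sqrt 3 * Sm t) * N2 t) (at t)"
  using sol unfolding WH_solution_def q_eq Z_def by (simp add: algebra_simps)

lemma N3_deriv:
  "(N3 has_real_derivative (2 * Z t - 3/2 * (D t)^2 - 2 * sqrt 3 * Sm t) * N3 t) (at t)"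
  using sol unfolding WH_solution_def q_eq Z_def by (simp add: algebra_simps)

lemma Z_deriv: "(Z has_real_derivative -(3/2) * (D t)^2 * Z t) (at t)"
proof -
  have "(Sp has_real_derivative -(2 - WH_q (Sp t) (Sm t)) * Sp t - 3 * WH_Sp 0 (N2 t) (N3 t)) (at t)"
    using sol unfolding WH_solution_def by simp
  moreover have "-(2 - WH_q (Sp t) (Sm t)) * Sp t - 3 * WH_Sp 0 (N2 t) (N3 t) = -(3/2) * (D t)^2 * Z t"
    unfolding q_eq WH_Sp_def Z_def D_def by (simp add: field_simps power2_eq_square)
  ultimately show ?thesis
    unfolding Z_def[abs_def] by (auto intro!: derivative_eq_intros)
qed

lemma Sm_deriv:
  "(Sm has_real_derivative -(3/2) * (D t)^2 * Sm t - 3 * sqrt 3 / 2 * D t * M t) (at t)"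
proof -
  have "(Sm has_real_derivative -(2 - WH_q (Sp t) (Sm t)) * Sm t - 3 * WH_Sm 0 (N2 t) (N3 t)) (at t)"
    using sol unfolding WH_solution_def by simp
  moreover have "-(2 - WH_q (Sp t) (Sm t)) * Sm t - 3 * WH_Sm 0 (N2 t) (N3 t)
      = -(3/2) * (D t)^2 * Sm t - 3 * sqrt 3 / 2 * D t * M t"
    unfolding q_eq WH_Sm_def M_def D_def by (simp add: algebra_simps power2_eq_square)
  ultimately show ?thesis by simp
qed

lemma D_deriv:
  "(D has_real_derivative (2 * Z t - 3/2 * (D t)^2) * D t + 2 * sqrt 3 * Sm t * M t) (at t)"
proof -
  have "(D has_real_derivative (2 * Z t - 3/2 * (D t)^2 + 2 * sqrt 3 * Sm t) * N2 t
      - (2 * Z t - 3/2 * (D t)^2 - 2 * sqrt 3 * Sm t) * N3 t) (at t)"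
    using DERIV_diff[OF N2_deriv N3_deriv] by (simp add: D_def[abs_def])
  moreover have "(2 * Z t - 3/2 * (D t)^2 + 2 * sqrt 3 * Sm t) * N2 t
      - (2 * Z t - 3/2 * (D t)^2 - 2 * sqrt 3 * Sm t) * N3 t
      = (2 * Z t - 3/2 * (D t)^2) * D t + 2 * sqrt 3 * Sm t * M t"
    by (simp add: M_def D_def field_simps)
  ultimately show ?thesis by simp
qed

lemma M_deriv:
  "(M has_real_derivative (2 * Z t - 3/2 * (D t)^2) * M t + 2 * sqrt 3 * Sm t * D t) (at t)"
proof -
  have "(M has_real_derivative (2 * Z t - 3/2 * (D t)^2 + 2 * sqrt 3 * Sm t) * N2 t
      + (2 * Z t - 3/2 * (D t)^2 - 2 * sqrt 3 * Sm t) * N3 t) (at t)"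
    using DERIV_add[OF N2_deriv N3_deriv] by (simp add: M_def[abs_def])
  moreover have "(2 * Z t - 3/2 * (D t)^2 + 2 * sqrt 3 * Sm t) * N2 t
      + (2 * Z t - 3/2 * (D t)^2 - 2 * sqrt 3 * Sm t) * N3 t
      = (2 * Z t - 3/2 * (D t)^2) * M t + 2 * sqrt 3 * Sm t * D t"
    by (simp add: M_def D_def field_simps)
  ultimately show ?thesis by simp
qed

lemma P_deriv: "(P has_real_derivative (4 * Z t - 3 * (D t)^2) * P t) (at t)"
proof -
  have "(P has_real_derivative (2 * Z t - 3/2 * (D t)^2 + 2 * sqrt 3 * Sm t) * N2 t * N3 t
      + (2 * Z t - 3/2 * (D t)^2 - 2 * sqrt 3 * Sm t) * N3 t * N2 t) (at t)"
    unfolding P_def[abs_def] by (rule DERIV_mult N2_deriv N3_deriv)+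
  then show ?thesis by (simp add: P_def algebra_simps)
qed

lemma M_pos: "M t > 0"
  using N2_pos[of t] N3_pos[of t] unfolding M_def by simp

lemma P_pos: "P t > 0"
  using N2_pos[of t] N3_pos[of t] unfolding P_def by simp

lemma abs_D_le_M: "\<bar>D t\<bar> \<le> M t"
  using N2_pos[of t] N3_pos[of t] unfolding D_def M_def by auto

lemma M_square: "(M t)^2 = (D t)^2 + 4 * P t"
  unfolding M_def D_def P_def by (simp add: power2_eq_square algebra_simps)

lemma abs_Sm_le_1: "\<bar>Sm t\<bar> \<le> 1"
proof -
  have "(Sm t)^2 \<le> 1"
    using constraint[of t] zero_le_power2[of "Sp t"] zero_le_power2[of "D t"] by linarith
  thus ?thesis using abs_square_le_1 by blast
qed

lemma Z_constraint: "(Sm t)^2 + 3/4 * (D t)^2 = Z t * (2 - Z t)"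
  using constraint[of t] unfolding Z_def by (simp add: algebra_simps power2_eq_square)

lemma Z_nonneg: "0 \<le> Z t"
proof -
  have "Z t * (2 - Z t) \<ge> 0"
    using Z_constraint[of t] zero_le_power2[of "Sm t"] zero_le_power2[of "D t"] by linarith
  thus ?thesis by (auto simp: zero_le_mult_iff)
qed

lemma Z_strictly_between_iff: "0 < Z t \<and> Z t < 2 \<longleftrightarrow> (Sm t)^2 + (D t)^2 > 0"
proof -
  have "0 < Z t \<and> Z t < 2 \<longleftrightarrow> Z t * (2 - Z t) > 0"
    by (auto simp: zero_less_mult_iff)
  also have "\<dots> \<longleftrightarrow> (Sm t)^2 + 3/4 * (D t)^2 > 0"
    by (simp only: Z_constraint)
  also have "\<dots> \<longleftrightarrow> (Sm t)^2 + (D t)^2 > 0"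
    using zero_le_power2[of "Sm t"] zero_le_power2[of "D t"] by linarith
  finally show ?thesis .
qed

lemma Z_antimono:
  assumes "s \<le> t" shows "Z t \<le> Z s"
proof (rule DERIV_nonpos_imp_nonincreasing[OF assms])
  fix x show "\<exists>y. DERIV Z x :> y \<and> y \<le> 0"
    using Z_deriv[of x] Z_nonneg[of x] by (intro exI conjI) (auto simp: mult_nonneg_nonneg)
qed

lemma inverse_Z_le:
  assumes "T \<le> s" "Z s > 0"
  shows "1 / Z s \<le> 1 / Z T + 4 * (s - T)"
proof -
  have "1 / Z s - 4 * s \<le> 1 / Z T - 4 * T"
  proof (rule DERIV_nonpos_imp_nonincreasing[where f = "\<lambda>x. 1 / Z x - 4 * x", OF assms(1)])
    fix x assume x: "T \<le> x" "x \<le> s"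
    have Zx: "Z x > 0" using Z_antimono[OF x(2)] assms(2) by simp
    have "Z x * (2 - Z x) \<le> 2 * Z x" by (simp add: algebra_simps)
    hence "3/2 * (D x)^2 \<le> 4 * Z x"
      using Z_constraint[of x] zero_le_power2[of "Sm x"] by linarith
    hence "3/2 * (D x)^2 / Z x - 4 \<le> 0" using Zx by (simp add: divide_le_eq)
    moreover have "((\<lambda>x. 1 / Z x - 4 * x) has_real_derivative 3/2 * (D x)^2 / Z x - 4) (at x)"
      using Zx by (auto intro!: derivative_eq_intros Z_deriv simp: field_simps power2_eq_square)
    ultimately show "\<exists>y. DERIV (\<lambda>x. 1 / Z x - 4 * x) x :> y \<and> y \<le> 0" by blast
  qed
  thus ?thesis by simp
qed

lemma P_div_Z_mono:
  assumes "T \<le> s" "Z s > 0"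
  shows "P T / Z T \<le> P s / Z s"
proof -
  define L where "L x = 1 / Z T + 4 * (x - T)" for x
  have Z_pos: "Z x > 0" if "x \<le> s" for x
    using Z_antimono[OF that] assms(2) by simp
  have L_pos: "L x > 0" if "T \<le> x" for x
    using Z_pos[of T] assms(1) that unfolding L_def by (simp add: add_pos_nonneg)
  have ZL: "1 \<le> Z x * L x" if "T \<le> x" "x \<le> s" for x
    using inverse_Z_le[OF that(1) Z_pos[OF that(2)]] Z_pos[OF that(2)]
    unfolding L_def by (simp add: divide_le_eq mult.commute)
  \<comment> \<open>The \<open>D\<close>-terms cancel in \<open>(ln P - 2 ln Z)' = 4 Z\<close>, and \<open>4 / L \<le> 4 Z\<close>.\<close>
  have "ln (P T) - 2 * ln (Z T) - ln (L T) \<le> ln (P s) - 2 * ln (Z s) - ln (L s)"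
  proof (rule DERIV_nonneg_imp_nondecreasing[OF assms(1)])
    fix x assume x: "T \<le> x" "x \<le> s"
    have "(L has_real_derivative 4) (at x)"
      unfolding L_def by (auto intro!: derivative_eq_intros)
    hence "((\<lambda>x. ln (P x) - 2 * ln (Z x) - ln (L x)) has_real_derivative 4 * Z x - 4 / L x) (at x)"
      using Z_pos[OF x(2)] L_pos[OF x(1)] P_pos[of x]
      by (auto intro!: derivative_eq_intros Z_deriv P_deriv simp: field_simps power2_eq_square)
    moreover have "4 / L x \<le> 4 * Z x"
      using ZL[OF x] L_pos[OF x(1)] by (simp add: divide_le_eq mult.commute)
    ultimately show "\<exists>y. ((\<lambda>x. ln (P x) - 2 * ln (Z x) - ln (L x)) has_real_derivative y) (at x)
        \<and> 0 \<le> y"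
      by (intro exI conjI) auto
  qed
  moreover have "ln (L T) = - ln (Z T)"
    using Z_pos[of T] assms(1) unfolding L_def by (simp add: ln_div)
  moreover have "0 \<le> ln (Z s) + ln (L s)"
  proof -
    have "0 \<le> ln (Z s * L s)" using ZL[of s] assms(1) by simp
    thus ?thesis using Z_pos[of s] L_pos[of s] assms(1) by (simp add: ln_mult)
  qed
  ultimately have "ln (P T / Z T) \<le> ln (P s / Z s)"
    using P_pos[of T] P_pos[of s] Z_pos[of T] Z_pos[of s] assms(1) by (simp add: ln_div)
  thus ?thesis
    using P_pos[of T] P_pos[of s] Z_pos[of T] Z_pos[of s] assms(1) by simp
qed

lemma W_deriv:
  assumes "Z t > 0"
  shows "(W has_real_derivative ((Sm t)^2 + 3/4 * (D t)^2 - (Sm t)^2 * (D t)^2 / (M t)^2) / Z t) (at t)"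
proof -
  have sqrt3: "sqrt 3 * (sqrt 3 * x) = 3 * x" for x :: real
    by (simp add: mult.assoc[symmetric])
  show ?thesis
    unfolding W_def[abs_def] using assms M_pos[of t]
    by (auto intro!: derivative_eq_intros Sm_deriv D_deriv M_deriv Z_deriv
        simp: field_simps power2_eq_square sqrt3)
qed

lemma Z_mult_W_bounds:
  assumes "Z t > 0"
  shows "1/2 \<le> Z t * W t" and "Z t * W t \<le> 3/2"
proof -
  have "sqrt 3 \<le> (2::real)"
    using real_sqrt_le_mono[of 3 4] by simp
  hence "\<bar>sqrt 3 * Sm t * D t\<bar> \<le> 2 * 1 * M t"
    unfolding abs_mult using abs_Sm_le_1[of t] abs_D_le_M[of t] by (intro mult_mono) auto
  hence bound: "\<bar>sqrt 3 * Sm t * D t / (6 * M t)\<bar> \<le> 1/2"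
    using M_pos[of t] by (simp add: abs_divide divide_le_eq)
  have ZW: "Z t * W t = 1 + sqrt 3 * Sm t * D t / (6 * M t)"
    using assms unfolding W_def by simp
  show "1/2 \<le> Z t * W t" using abs_le_D2[OF bound] ZW by linarith
  show "Z t * W t \<le> 3/2" using abs_le_D1[OF bound] ZW by linarith
qed

lemma W_growth:
  assumes "T \<le> s" "Z s > 0"
  shows "W T + 3 * (P T / Z T) * (2 - Z T) / (2 + 3 * (P T / Z T)) * (s - T) \<le> W s"
proof -
  define \<delta> where "\<delta> = P T / Z T"
  define c where "c = 3 * \<delta> * (2 - Z T) / (2 + 3 * \<delta>)"
  have Z_pos: "Z x > 0" if "x \<le> s" for x
    using Z_antimono[OF that] assms(2) by simp
  have \<delta>_pos: "\<delta> > 0"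
    unfolding \<delta>_def using P_pos[of T] Z_pos[of T] assms(1) by simp
  have "W T - c * T \<le> W s - c * s"
  proof (rule DERIV_nonneg_imp_nondecreasing[OF assms(1)])
    fix x assume x: "T \<le> x" "x \<le> s"
    have "\<delta> * Z x \<le> P x"
      using P_div_Z_mono[OF x(1) Z_pos[OF x(2)]] Z_pos[OF x(2)] unfolding \<delta>_def
      by (simp add: le_divide_eq)
    have "c \<le> 3 * \<delta> * (2 - Z x) / (2 + 3 * \<delta>)"
      unfolding c_def using Z_antimono[OF x(1)] \<delta>_pos
      by (intro divide_right_mono mult_left_mono) auto
    also have "\<dots> \<le> ((Sm x)^2 + 3/4 * (D x)^2 - (Sm x)^2 * (D x)^2 / (M x)^2) / Z x"
      by (rule rate_lower_bound[OF Z_pos[OF x(2)] zero_le_power2 Z_constraint M_square \<delta>_pos])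
        fact
    finally have "0 \<le> ((Sm x)^2 + 3/4 * (D x)^2 - (Sm x)^2 * (D x)^2 / (M x)^2) / Z x - c"
      by simp
    moreover have "((\<lambda>x. W x - c * x) has_real_derivative
        ((Sm x)^2 + 3/4 * (D x)^2 - (Sm x)^2 * (D x)^2 / (M x)^2) / Z x - c) (at x)"
      using Z_pos[OF x(2)] by (auto intro!: derivative_eq_intros W_deriv)
    ultimately show "\<exists>y. ((\<lambda>x. W x - c * x) has_real_derivative y) (at x) \<and> 0 \<le> y"
      by blast
  qed
  hence "W T + c * (s - T) \<le> W s" by (simp add: algebra_simps)
  thus ?thesis by (simp only: c_def \<delta>_def)
qed

lemma Z_decay:
  assumes "\<exists>t. (Sm t)^2 + (D t)^2 > 0"
  shows "\<exists>T>0. \<exists>K\<ge>0. \<forall>t\<ge>T. \<bar>Z t\<bar> \<le> K / t"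
proof (cases "\<exists>t\<ge>1. Z t = 0")
  case True
  then obtain T where T: "T \<ge> 1" "Z T = 0" by auto
  have "\<bar>Z t\<bar> \<le> 0 / t" if "t \<ge> T" for t
    using Z_antimono[OF that] Z_nonneg[of t] T by simp
  with T show ?thesis by (intro exI[of _ T] conjI exI[of _ 0]) auto
next
  case False
  obtain t0 where "Z t0 < 2"
    using assms Z_strictly_between_iff by blast
  define T where "T = max 1 t0"
  have T: "T \<ge> 1" "Z T < 2"
    using Z_antimono[of t0 T] \<open>Z t0 < 2\<close> unfolding T_def by auto
  have Z_pos: "Z t > 0" if "t \<ge> T" for t
  proof -
    have "Z t \<noteq> 0" using False T that by auto
    thus ?thesis using Z_nonneg[of t] by simp
  qed
  define c where "c = 3 * (P T / Z T) * (2 - Z T) / (2 + 3 * (P T / Z T))"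
  have c_pos: "c > 0"
    unfolding c_def using P_pos[of T] Z_pos[of T] T
    by (intro divide_pos_pos mult_pos_pos add_pos_pos) auto
  have "W T > 0"
  proof -
    have "Z T * W T > 0" using Z_mult_W_bounds(1)[OF Z_pos[of T]] by simp
    thus ?thesis using Z_pos[of T] by (simp add: zero_less_mult_iff)
  qed
  define m where "m = min (W T / T) c"
  have m_pos: "m > 0"
    unfolding m_def using \<open>W T > 0\<close> T c_pos by simp
  have "\<bar>Z t\<bar> \<le> (3 / (2 * m)) / t" if t: "t \<ge> T" for t
  proof -
    have "m \<le> W T / T" unfolding m_def by simp
    hence "m * T \<le> W T" using T by (simp add: le_divide_eq)
    moreover have "m * (t - T) \<le> c * (t - T)"
      unfolding m_def using t by (simp add: mult_right_mono)
    ultimately have "m * t \<le> W T + c * (t - T)" by (simp add: algebra_simps)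
    also have "\<dots> \<le> W t"
      using W_growth[OF t Z_pos[OF t]] unfolding c_def .
    finally have "Z t * (m * t) \<le> Z t * W t"
      using Z_pos[OF t] by (simp add: mult_left_mono)
    also have "\<dots> \<le> 3/2" by (rule Z_mult_W_bounds(2)[OF Z_pos[OF t]])
    finally show ?thesis
      using Z_pos[OF t] m_pos T t by (simp add: le_divide_eq)
  qed
  with T m_pos show ?thesis by (intro exI[of _ T] conjI exI[of _ "3 / (2 * m)"]) auto
qed

end

theorem mainTheorem11:
  fixes N1 N2 N3 Sp Sm :: "real \<Rightarrow> real"
  assumes sol: "WH_solution N1 N2 N3 Sp Sm"
    and N1z: "\<forall>t. N1 t = 0"
    and N2p: "\<forall>t. N2 t > 0"
    and N3p: "\<forall>t. N3 t > 0"
    and nondeg: "\<exists>t. (Sm t)^2 + (N2 t - N3 t)^2 > 0"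
  shows "\<forall>p::real. p > 1 \<longrightarrow>
           set_integrable lborel {0..} (\<lambda>t. \<bar>1 + Sp t\<bar> powr p)"
proof (intro allI impI)
  fix p :: real assume p: "p > 1"
  have "N1 = (\<lambda>_. 0)" using N1z by auto
  then interpret WH_bianchi_VII0 N2 N3 Sp Sm
    using sol N2p N3p by unfold_locales auto
  obtain T K where decay: "T > 0" "K \<ge> 0" "\<forall>t\<ge>T. \<bar>Z t\<bar> \<le> K / t"
    using Z_decay nondeg unfolding D_def by blast
  have "continuous_on UNIV Z"
    using Z_deriv by (intro continuous_at_imp_continuous_on) (blast intro: DERIV_isCont)
  with decay p have "set_integrable lborel {0..} (\<lambda>t. \<bar>Z t\<bar> powr p)"
    by (intro set_integrable_powr_of_inverse_decay) auto
  thus "set_integrable lborel {0..} (\<lambda>t. \<bar>1 + Sp t\<bar> powr p)"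
    by (simp add: Z_def)
qed

end
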